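(* Setting: integers $N,Q,S\ge1$, $1\le M\le N$, $J\ge1$; $\mathbf{H}\in\mathbb{R}^{Q\times N}\setminus\{\mathbf{0}\}$, $\mathbf{y}\in\mathbb{R}^Q$, a real matrix $\mathbf{V}_0$ with $N$ columns, and for $s\in\{1,\dots,S\}$: $P_s\ge1$, $\mathbf{V}_s\in\mathbb{R}^{P_s\times N}$, $\mathbf{c}_s\in\mathbb{R}^{P_s}$; $\Phi:\mathbb{R}^Q\to\mathbb{R}$; functions $\psi_{s,\delta}:\mathbb{R}\to\mathbb{R}$ for $\delta>0$; $F_\delta(\mathbf{x})=\Phi(\mathbf{H}\mathbf{x}-\mathbf{y})+\sum_{s=1}^S\psi_{s,\delta}(\|\mathbf{V}_s\mathbf{x}-\mathbf{c}_s\|)+\|\mathbf{V}_0\mathbf{x}\|^2$. Assume: (A1i) $\Phi$ is continuous and coercive; (A1ii) for every $\delta>0$ and $s$, $\psi_{s,\delta}$ is continuous and nonnegative; (A1iii) $\operatorname{Ker}\mathbf{H}\cap\operatorname{Ker}\mathbf{V}_0=\{\mathbf{0}\}$. Fix $\delta>0$ and assume: (A3i) $\Phi$ is differentiable with $L$-Lipschitz gradient; (A3ii) each $\psi_{s,\delta}$ is differentiable; (A3iii) each $t\mapsto\psi_{s,\delta}(\sqrt t)$ is concave on $[0,+\infty)$; (A3iv) for each $s$ there is $\overline\omega_s\in[0,+\infty)$ with $0\le\dot\psi_{s,\delta}(t)\le\overline\omega_s t$ for all $t>0$, and $\lim_{t\to0}\dot\psi_{s,\delta}(t)/t\in\mathbb{R}$.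 Let $\omega_{s,\delta}(t)=\dot\psi_{s,\delta}(t)/t$, extended by continuity at $0$, fix $\mu\in[L,+\infty)$ and set $\mathbf{A}(\mathbf{x})=\mu\mathbf{H}^\top\mathbf{H}+2\mathbf{V}_0^\top\mathbf{V}_0+\mathbf{V}^\top\operatorname{Diag}\{\mathbf{b}(\mathbf{x})\}\mathbf{V}$, where $\mathbf{V}=[\mathbf{V}_1^\top|\cdots|\mathbf{V}_S^\top]^\top$ and $b_{P_1+\dots+P_{s-1}+p}(\mathbf{x})=\omega_{s,\delta}(\|\mathbf{V}_s\mathbf{x}-\mathbf{c}_s\|)$ for $p\in\{1,\dots,P_s\}$. Consider the iteration: $\mathbf{x}_0\in\mathbb{R}^N$; for each $k\in\mathbb{N}$, given any matrix $\mathbf{D}_k\in\mathbb{R}^{N\times M}$, set $\mathbf{u}_k^0=\mathbf{0}$ and for $j=1,\dots,J$: $\mathbf{B}_k^{j-1}=\mathbf{D}_k^\top\mathbf{A}(\mathbf{x}_k+\mathbf{D}_k\mathbf{u}_k^{j-1})\mathbf{D}_k$, $\mathbf{u}_k^j=\mathbf{u}_k^{j-1}-(\mathbf{B}_k^{j-1})^{\dagger}\mathbf{D}_k^\top\nabla F_\delta(\mathbf{x}_k+\mathbf{D}_k\mathbf{u}_k^{j-1})$ (pseudo-inverse $\dagger$); then $\mathbf{x}_{k+1}=\mathbf{x}_k+\mathbf{D}_k\mathbf{u}_k^J$. Write $\mathbf{x}_k^j=\mathbf{x}_k+\mathbf{D}_k\mathbf{u}_k^j$. Claim: for every $k\in\mathbb{N}$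 and $j\in\{0,\dots,J-1\}$, $$F_\delta(\mathbf{x}_k^j)-F_\delta(\mathbf{x}_k^{j+1})\ge\frac{\eta}{2}\|\mathbf{x}_k^{j+1}-\mathbf{x}_k^j\|^2,$$ where $\eta>0$ is the smallest eigenvalue of $\mu\mathbf{H}^\top\mathbf{H}+2\mathbf{V}_0^\top\mathbf{V}_0$.
   Context: $\|\cdot\|$ is the Euclidean norm; $\dot\psi_{s,\delta}$ is the derivative of $\psi_{s,\delta}$. *)

theory Defs
  imports "HOL-Analysis.Analysis"
begin

definition grad :: "('a::euclidean_space \<Rightarrow> real) \<Rightarrow> 'a \<Rightarrow> 'a" where
  "grad f x = (THE g. (f has_derivative (\<lambda>h. g \<bullet> h)) (at x))"

definition coercive :: "('a::real_normed_vector \<Rightarrow> real) \<Rightarrow> bool" where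
  "coercive f \<longleftrightarrow> filterlim f at_top at_infinity"

definition pinv :: "real^'m^'k \<Rightarrow> real^'k^'m" where
  "pinv A = (THE X. A ** X ** A = A \<and> X ** A ** X = X \<and>
                    transpose (A ** X) = A ** X \<and> transpose (X ** A) = X ** A)"

definition Diag :: "real^'p \<Rightarrow> real^'p^'p" where
  "Diag b = (\<chi> i j. if i = j then b $ i else 0)"

definition is_eigenvalue :: "real^'n^'n \<Rightarrow> real \<Rightarrow> bool" where
  "is_eigenvalue A l \<longleftrightarrow> (\<exists>v. v \<noteq> 0 \<and> A *v v = l *\<^sub>R v)"

definition min_eigenvalue :: "real^'n^'n \<Rightarrow> real" where
  "min_eigenvalue A = Min {l. is_eigenvalue A l}"

text \<open>The stacked matrix V (rows indexed by 'p) is split into blocks V_1,...,V_S: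
  row p belongs to block blk p.  blocknorm gives the Euclidean norm of V_s x - c_s.\<close>
definition blocknorm :: "real^'n^'p \<Rightarrow> real^'p \<Rightarrow> ('p \<Rightarrow> nat) \<Rightarrow> nat \<Rightarrow> real^'n \<Rightarrow> real" where
  "blocknorm V c blk s x = sqrt (\<Sum>p\<in>{p. blk p = s}. ((V *v x - c) $ p)^2)"

definition Fdelta :: "(real^'q \<Rightarrow> real) \<Rightarrow> real^'n^'q \<Rightarrow> real^'q \<Rightarrow>
    (nat \<Rightarrow> real \<Rightarrow> real \<Rightarrow> real) \<Rightarrow> real \<Rightarrow> nat \<Rightarrow> real^'n^'p \<Rightarrow> real^'p \<Rightarrow> ('p \<Rightarrow> nat) \<Rightarrow>
    real^'n^'r \<Rightarrow> real^'n \<Rightarrow> real" where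
  "Fdelta \<Phi> H y psi \<delta> S V c blk V0 x =
     \<Phi> (H *v x - y) + (\<Sum>s=1..S. psi s \<delta> (blocknorm V c blk s x)) + (norm (V0 *v x))^2"

definition omega :: "(real \<Rightarrow> real) \<Rightarrow> real \<Rightarrow> real" where
  "omega \<psi> t = (if t = 0 then Lim (at 0) (\<lambda>t. deriv \<psi> t / t) else deriv \<psi> t / t)"

definition Amat :: "real \<Rightarrow> real^'n^'q \<Rightarrow> real^'n^'r \<Rightarrow> (nat \<Rightarrow> real \<Rightarrow> real \<Rightarrow> real) \<Rightarrow> real \<Rightarrow>
    real^'n^'p \<Rightarrow> real^'p \<Rightarrow> ('p \<Rightarrow> nat) \<Rightarrow> real^'n \<Rightarrow> real^'n^'n" where
  "Amat \<mu> H V0 psi \<delta> V c blk x =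
     \<mu> *\<^sub>R (transpose H ** H) + 2 *\<^sub>R (transpose V0 ** V0) +
     transpose V ** Diag (\<chi> p. omega (psi (blk p) \<delta>) (blocknorm V c blk (blk p) x)) ** V"

end

theory Submission
  imports Defs
begin

text \<open>A(x) defines a quadratic majorant of F at x: the descent lemma bounds the
  \<Phi>-term (as \<mu> \<ge> L), concavity of t \<mapsto> \<psi>(sqrt t) puts each \<psi>(norm (V_s x - c_s)) below the
  quadratic with curvature omega at the current point, and norm (V0 x)^2 is exactly quadratic.
  An inner step d = - D (D^T A D)^+ D^T grad F minimises this majorant over the range of D;
  the Penrose equations give grad F \<bullet> d = - d \<bullet> A d, so F decreases by at least
  d \<bullet> A d / 2 \<ge> \<eta> norm d^2 / 2, because A(x) dominates \<mu> H^T H + 2 V0^T V0, which is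
  positive definite by the kernel condition.\<close>

lemma inner_matrix_vector_transpose:
  fixes A :: "real^'n^'m"
  shows "(A *v x) \<bullet> y = x \<bullet> (transpose A *v y)"
  by (metis dot_lmul_matrix inner_commute transpose_matrix_vector)

lemma symmetric_matrix_iff_inner:
  fixes M :: "real^'n^'n"
  shows "transpose M = M \<longleftrightarrow> (\<forall>a b. (M *v a) \<bullet> b = a \<bullet> (M *v b))"
proof
  assume "transpose M = M"
  then show "\<forall>a b. (M *v a) \<bullet> b = a \<bullet> (M *v b)"
    by (metis inner_matrix_vector_transpose)
next
  assume "\<forall>a b. (M *v a) \<bullet> b = a \<bullet> (M *v b)"
  then have "transpose M *v a = M *v a" for a
    by (metis inner_commute inner_matrix_vector_transpose transpose_transpose vector_eq_rdot)
  then show "transpose M = M"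
    by (simp add: matrix_eq)
qed

lemma matrix_vector_mult_uminus_right: "A *v (- x) = - (A *v (x :: 'a::ring_1^'n))"
  by (simp add: vec_eq_iff matrix_vector_mult_def sum_negf)

lemma transpose_add: "transpose (A + B) = transpose A + transpose (B :: 'a::semiring_1^'n^'m)"
  by (simp add: transpose_def vec_eq_iff)

lemma transpose_Diag: "transpose (Diag b) = Diag b"
  by (simp add: Diag_def transpose_def vec_eq_iff)

lemma Diag_mult_vector: "Diag b *v z = (\<chi> p. b $ p * z $ p)"
proof -
  have "(\<Sum>j\<in>UNIV. (if i = j then b $ i else 0) * z $ j) = b $ i * z $ i" for i
    by (simp add: if_distrib[of "\<lambda>u. u * _"] cong: if_cong)
  then show ?thesis
    by (simp add: Diag_def matrix_vector_mult_def vec_eq_iff)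
qed

lemma inner_transpose_mult_self:
  fixes H :: "real^'n^'q"
  shows "d \<bullet> ((transpose H ** H) *v d) = (norm (H *v d))\<^sup>2"
  by (simp add: matrix_vector_mul_assoc[symmetric] power2_norm_eq_inner
      inner_matrix_vector_transpose[of H d "H *v d"])

lemma inner_transpose_mult_mult:
  fixes V :: "real^'n^'p"
  shows "d \<bullet> ((transpose V ** B ** V) *v d) = (V *v d) \<bullet> (B *v (V *v d))"
  by (simp add: matrix_vector_mul_assoc[symmetric] inner_matrix_vector_transpose[of V d])

lemma inner_Diag_self_nonneg:
  assumes "\<And>p. 0 \<le> w $ p"
  shows "0 \<le> z \<bullet> (Diag w *v z)"
  using assms by (simp add: Diag_mult_vector inner_vec_def sum_nonneg mult.left_commute)

lemma inner_scaled_gram_sum: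
  fixes H :: "real^'n^'q" and K :: "real^'n^'r"
  shows "z \<bullet> ((a *\<^sub>R (transpose H ** H) + b *\<^sub>R (transpose K ** K)) *v z)
    = a * (norm (H *v z))\<^sup>2 + b * (norm (K *v z))\<^sup>2"
  by (simp add: matrix_vector_mult_add_rdistrib scaleR_matrix_vector_assoc[symmetric] inner_add_right
      inner_transpose_mult_self)

lemma transpose_scaled_gram_sum:
  fixes H :: "real^'n^'q" and K :: "real^'n^'r"
  shows "transpose (a *\<^sub>R (transpose H ** H) + b *\<^sub>R (transpose K ** K))
    = a *\<^sub>R (transpose H ** H) + b *\<^sub>R (transpose K ** K)"
  by (simp add: transpose_add transpose_scalar matrix_transpose_mul)

lemma scaled_gram_sum_pos:
  fixes H :: "real^'n^'q" and K :: "real^'n^'r"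
  assumes "0 < a" and "0 < b" and "{z. H *v z = 0} \<inter> {z. K *v z = 0} = {0}" and "z \<noteq> 0"
  shows "0 < z \<bullet> ((a *\<^sub>R (transpose H ** H) + b *\<^sub>R (transpose K ** K)) *v z)"
proof -
  have "H *v z \<noteq> 0 \<or> K *v z \<noteq> 0"
    using assms(3,4) by blast
  then show ?thesis
    using assms(1,2) by (auto simp: inner_scaled_gram_sum intro: add_pos_nonneg add_nonneg_pos)
qed

section \<open>Pseudo-inverses of symmetric matrices\<close>

definition is_pseudo_inverse :: "real^'m^'k \<Rightarrow> real^'k^'m \<Rightarrow> bool" where
  "is_pseudo_inverse A X \<longleftrightarrow> A ** X ** A = A \<and> X ** A ** X = X \<and>
     transpose (A ** X) = A ** X \<and> transpose (X ** A) = X ** A"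

lemma pseudo_inverse_unique:
  assumes X: "is_pseudo_inverse A X" and Y: "is_pseudo_inverse A Y"
  shows "X = Y"
proof -
  have a1: "A ** X ** A = A" and a2: "X ** A ** X = X" and a3: "transpose (A ** X) = A ** X"
    and a4: "transpose (X ** A) = X ** A" using X by (auto simp: is_pseudo_inverse_def)
  have b1: "A ** Y ** A = A" and b2: "Y ** A ** Y = Y" and b3: "transpose (A ** Y) = A ** Y"
    and b4: "transpose (Y ** A) = Y ** A" using Y by (auto simp: is_pseudo_inverse_def)
  have AX_AY: "A ** X = A ** Y"
  proof -
    have "A ** X = transpose (A ** Y ** A ** X)"
      using a3 b1 by (simp add: matrix_mul_assoc)
    also have "\<dots> = transpose (A ** X) ** transpose (A ** Y)"
      by (simp add: matrix_transpose_mul matrix_mul_assoc)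
    also have "\<dots> = A ** X ** A ** Y"
      using a3 b3 by (simp add: matrix_mul_assoc)
    finally show ?thesis
      using a1 by simp
  qed
  have XA_YA: "X ** A = Y ** A"
  proof -
    have "Y ** A = transpose (Y ** (A ** X ** A))"
      using b4 a1 by simp
    also have "\<dots> = transpose (Y ** A ** X ** A)"
      by (simp add: matrix_mul_assoc)
    also have "\<dots> = transpose (X ** A) ** transpose (Y ** A)"
      by (simp add: matrix_transpose_mul matrix_mul_assoc)
    also have "\<dots> = X ** A ** Y ** A"
      using a4 b4 by (simp add: matrix_mul_assoc)
    finally show ?thesis
      using b1 by (metis matrix_mul_assoc)
  qed
  have "X = X ** A ** Y"
    using a2 AX_AY by (metis matrix_mul_assoc)
  also have "\<dots> = Y"
    using b2 XA_YA by simp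
  finally show ?thesis .
qed

lemma pinv_eqI: "is_pseudo_inverse A X \<Longrightarrow> pinv A = X"
  unfolding pinv_def using pseudo_inverse_unique by (auto simp: is_pseudo_inverse_def)

lemma is_pseudo_inverse_transpose:
  "is_pseudo_inverse A X \<Longrightarrow> is_pseudo_inverse (transpose A) (transpose X)"
  unfolding is_pseudo_inverse_def
  by (metis matrix_transpose_mul matrix_mul_assoc transpose_transpose)

lemma orthogonal_projection_matrix_exists:
  fixes W :: "(real^'n) set"
  assumes W: "subspace W"
  obtains P :: "real^'n^'n"
  where "\<And>x. P *v x \<in> W" and "\<And>x w. w \<in> W \<Longrightarrow> (x - P *v x) \<bullet> w = 0"
    and "\<And>w. w \<in> W \<Longrightarrow> P *v w = w" and "transpose P = P"
proof -
  have "\<exists>a. a \<in> W \<and> (\<forall>w\<in>W. (x - a) \<bullet> w = 0)" for x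
    using orthogonal_subspace_decomp_exists[of W x] W
    by (metis add_diff_cancel_left' orthogonal_def span_eq_iff)
  then obtain p where p: "\<And>x. p x \<in> W" and orth: "\<And>x w. w \<in> W \<Longrightarrow> (x - p x) \<bullet> w = 0"
    by metis
  have unique: "p x = a" if "a \<in> W" "\<forall>w\<in>W. (x - a) \<bullet> w = 0" for x a
  proof -
    have "p x - a \<in> W"
      using W p that(1) by (simp add: subspace_diff)
    then have "(x - a) \<bullet> (p x - a) - (x - p x) \<bullet> (p x - a) = 0"
      using that(2) orth by simp
    then have "(p x - a) \<bullet> (p x - a) = 0"
      by (simp add: inner_diff_left inner_diff_right algebra_simps)
    then show ?thesis
      by simp
  qed
  have "linear p"
  proof (rule linearI)
    fix x y
    show "p (x + y) = p x + p y"
    proof (rule unique)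
      show "p x + p y \<in> W"
        using W p by (simp add: subspace_add)
      have "x + y - (p x + p y) = (x - p x) + (y - p y)"
        by simp
      then show "\<forall>w\<in>W. (x + y - (p x + p y)) \<bullet> w = 0"
        using orth by (simp only: inner_add_left) simp
    qed
  next
    fix r x
    show "p (r *\<^sub>R x) = r *\<^sub>R p x"
    proof (rule unique)
      show "r *\<^sub>R p x \<in> W"
        using W p by (simp add: subspace_scale)
      show "\<forall>w\<in>W. (r *\<^sub>R x - r *\<^sub>R p x) \<bullet> w = 0"
        using orth by (simp flip: scaleR_diff_right)
    qed
  qed
  then have P: "matrix p *v x = p x" for x
    by (simp add: matrix_works linear_matrix_vector_mul_eq)
  have "p a \<bullet> b = a \<bullet> p b" for a b
  proof -
    have "a \<bullet> p b = p a \<bullet> p b" and "b \<bullet> p a = p b \<bullet> p a"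
      using orth[of "p b" a] orth[of "p a" b] p by (simp_all add: inner_diff_left)
    then show ?thesis
      by (simp add: inner_commute)
  qed
  then have "transpose (matrix p) = matrix p"
    by (simp add: symmetric_matrix_iff_inner P)
  moreover have "p w = w" if "w \<in> W" for w
    using that by (intro unique) simp_all
  ultimately show thesis
    using that[of "matrix p"] p orth by (simp add: P)
qed

lemma symmetric_matrix_kernel_orthogonal_range:
  fixes B :: "real^'n^'n"
  assumes "transpose B = B"
  shows "B *v z = 0 \<longleftrightarrow> (\<forall>v. z \<bullet> (B *v v) = 0)"
proof -
  have B_inner: "(B *v a) \<bullet> b = a \<bullet> (B *v b)" for a b
    using assms symmetric_matrix_iff_inner by blast
  show ?thesis
    using B_inner[of z "B *v z"] by (auto simp: B_inner[symmetric])
qed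

text \<open>The kernel of symmetric B is the orthogonal complement of its range W, so adding the
  projection onto that complement makes B invertible without changing it on W.\<close>
lemma symmetric_plus_complement_projection:
  fixes B P :: "real^'n^'n"
  assumes symB: "transpose B = B"
    and PW: "\<And>x. P *v x \<in> range ((*v) B)"
    and P_orth: "\<And>x w. w \<in> range ((*v) B) \<Longrightarrow> (x - P *v x) \<bullet> w = 0"
    and P_id: "\<And>w. w \<in> range ((*v) B) \<Longrightarrow> P *v w = w"
  shows "invertible (B + (mat 1 - P))"
    and "(B + (mat 1 - P)) *v z \<in> range ((*v) B) \<Longrightarrow> z \<in> range ((*v) B)"
proof -
  define C where "C = B + (mat 1 - P)"
  have C_apply: "C *v z = B *v z + (z - P *v z)" for z
    by (simp add: C_def matrix_vector_mult_add_rdistrib matrix_vector_mult_diff_rdistrib)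
  have in_range: "z \<in> range ((*v) B)" if Cz: "C *v z \<in> range ((*v) B)" for z
  proof -
    obtain u where "C *v z = B *v u"
      using Cz by blast
    then have "z - P *v z = B *v (u - z)"
      using C_apply[of z] by (simp add: matrix_vector_mult_diff_distrib eq_diff_eq add.commute)
    then have "z - P *v z \<in> range ((*v) B)"
      by simp
    then have "(z - P *v z) \<bullet> (z - P *v z) = 0"
      using P_orth by blast
    then show ?thesis
      using PW[of z] by simp
  qed
  have "z = 0" if "C *v z = 0" for z
  proof -
    have "C *v z \<in> range ((*v) B)"
      using that rangeI[of "(*v) B" 0] by simp
    then obtain v where v: "z = B *v v"
      using in_range by blast
    then have "B *v z = 0"
      using that C_apply P_id by simp
    then show "z = 0"
      using symmetric_matrix_kernel_orthogonal_range[OF symB] v by (metis inner_eq_zero_iff)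
  qed
  then have "\<exists>G. G ** C = mat 1"
    using matrix_left_invertible_ker by blast
  then show "invertible (B + (mat 1 - P))"
    unfolding C_def[symmetric] by (simp add: invertible_left_inverse)
  show "(B + (mat 1 - P)) *v z \<in> range ((*v) B) \<Longrightarrow> z \<in> range ((*v) B)"
    using in_range unfolding C_def .
qed

lemma symmetric_pseudo_inverse_exists:
  fixes B :: "real^'n^'n"
  assumes symB: "transpose B = B"
  shows "\<exists>X. is_pseudo_inverse B X"
proof -
  have "subspace (range ((*v) B))"
    by (intro linear_subspace_image subspace_UNIV) simp
  then obtain P where PW: "\<And>x. P *v x \<in> range ((*v) B)"
    and P_orth: "\<And>x w. w \<in> range ((*v) B) \<Longrightarrow> (x - P *v x) \<bullet> w = 0"
    and P_id: "\<And>w. w \<in> range ((*v) B) \<Longrightarrow> P *v w = w" and symP: "transpose P = P"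
    using orthogonal_projection_matrix_exists by blast
  define C where "C = B + (mat 1 - P)"
  obtain G where CG: "C ** G = mat 1" and GC: "G ** C = mat 1"
    using symmetric_plus_complement_projection(1)[OF symB PW P_orth P_id] unfolding C_def invertible_def
    by blast
  have C_range: "C *v w = B *v w" if "w \<in> range ((*v) B)" for w
    using P_id[OF that] by (simp add: C_def matrix_vector_mult_add_rdistrib matrix_vector_mult_diff_rdistrib)
  define X where "X = G ** P"
  have X_range: "X *v y \<in> range ((*v) B)" for y
    using symmetric_plus_complement_projection(2)[OF symB PW P_orth P_id, of "X *v y"] CG PW
    by (simp add: C_def[symmetric] X_def matrix_vector_mul_assoc matrix_mul_assoc)
  have "B *v (X *v y) = P *v y" for y
    using C_range[OF X_range] CG by (simp add: X_def matrix_vector_mul_assoc matrix_mul_assoc)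
  then have BX: "B ** X = P"
    by (simp add: matrix_eq matrix_vector_mul_assoc)
  have "B *v (P *v v) = B *v v" for v
    using symmetric_matrix_kernel_orthogonal_range[OF symB, of "v - P *v v"] P_orth
    by (simp add: matrix_vector_mult_diff_distrib)
  then have "X *v (B *v v) = P *v v" for v
    using P_id C_range[OF PW] GC
    by (metis X_def matrix_vector_mul_assoc matrix_vector_mul_lid rangeI)
  then have XB: "X ** B = P"
    by (simp add: matrix_eq matrix_vector_mul_assoc)
  have "P ** B = B" and "P ** X = X"
    using P_id PW X_range by (simp_all add: matrix_eq matrix_vector_mul_assoc[symmetric])
  then have "is_pseudo_inverse B X"
    unfolding is_pseudo_inverse_def using BX XB symP by (simp add: matrix_mul_assoc)
  then show ?thesis ..
qed

lemma pinv_symmetric: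
  fixes B :: "real^'n^'n"
  assumes "transpose B = B"
  shows "is_pseudo_inverse B (pinv B)" and "transpose (pinv B) = pinv B"
proof -
  obtain X where X: "is_pseudo_inverse B X"
    using symmetric_pseudo_inverse_exists[OF assms] ..
  then show "is_pseudo_inverse B (pinv B)"
    by (simp add: pinv_eqI)
  have "is_pseudo_inverse B (transpose X)"
    using is_pseudo_inverse_transpose[OF X] assms by simp
  then show "transpose (pinv B) = pinv B"
    using X by (simp add: pinv_eqI pseudo_inverse_unique)
qed

section \<open>The smallest eigenvalue of a symmetric matrix\<close>

lemma rayleigh_quotient_min_exists:
  fixes M :: "real^'n^'n"
  shows "\<exists>v. norm v = 1 \<and> (\<forall>x. (v \<bullet> (M *v v)) * (norm x)\<^sup>2 \<le> x \<bullet> (M *v x))"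
proof -
  define q where "q x = x \<bullet> (M *v x)" for x
  have "\<exists>v\<in>sphere 0 1. \<forall>y\<in>sphere 0 1. q v \<le> q y"
    unfolding q_def by (intro continuous_attains_inf compact_sphere continuous_intros) simp
  then obtain v where v: "v \<in> sphere 0 1" and v_min: "\<And>y. y \<in> sphere 0 1 \<Longrightarrow> q v \<le> q y"
    by blast
  have "q v * (norm x)\<^sup>2 \<le> q x" for x
  proof (cases "x = 0")
    case False
    have "q v \<le> q (x /\<^sub>R norm x)"
      using False by (intro v_min) simp
    also have "\<dots> = q x / (norm x)\<^sup>2"
      by (simp add: q_def matrix_vector_mult_scaleR power2_eq_square field_simps)
    finally show ?thesis
      using False by (simp add: field_simps)
  qed (simp add: q_def)
  with v show ?thesis
    by (auto simp: q_def)
qed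

lemma rayleigh_quotient_min_eigenvector:
  fixes M :: "real^'n^'n"
  assumes symM: "transpose M = M"
    and lower: "\<And>x. l * (x \<bullet> x) \<le> x \<bullet> (M *v x)"
    and attained: "l * (v \<bullet> v) = v \<bullet> (M *v v)"
  shows "M *v v = l *\<^sub>R v"
proof -
  define q where "q x = x \<bullet> (M *v x) - l * (x \<bullet> x)" for x
  define w where "w = M *v v - l *\<^sub>R v"
  have q_nonneg: "0 \<le> q x" for x
    using lower[of x] by (simp add: q_def)
  have "(M *v w) \<bullet> v = w \<bullet> (M *v v)"
    using symM symmetric_matrix_iff_inner by blast
  then have sym: "v \<bullet> (M *v w) = w \<bullet> (M *v v)"
    by (simp add: inner_commute)
  text \<open>q is a nonnegative quadratic form vanishing at v, so v is a critical point of q: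
    along the line v + t w the linear term 2 t (w \<bullet> w) must vanish.\<close>
  have line: "q (v + t *\<^sub>R w) = 2 * t * (w \<bullet> w) + t\<^sup>2 * q w" for t
  proof -
    have "q (v + t *\<^sub>R w) = q v + 2 * t * (w \<bullet> (M *v v) - l * (w \<bullet> v)) + t\<^sup>2 * q w"
      by (simp add: q_def matrix_vector_right_distrib matrix_vector_mult_scaleR inner_add_left
          inner_add_right sym inner_commute[of v w] power2_eq_square algebra_simps)
    moreover have "w \<bullet> (M *v v) - l * (w \<bullet> v) = w \<bullet> w"
      by (simp add: w_def inner_diff_right)
    ultimately show ?thesis
      using attained by (simp add: q_def)
  qed
  have "w \<bullet> w \<le> 0"
  proof (rule field_le_epsilon)
    fix e :: real
    assume "0 < e"
    define s where "s = 2 * e / (q w + 1)"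
    have s: "0 < s"
      using \<open>0 < e\<close> q_nonneg[of w] by (simp add: s_def)
    have "0 \<le> s * (s * q w - 2 * (w \<bullet> w))"
      using q_nonneg[of "v + (- s) *\<^sub>R w"] line[of "- s"] by (simp add: power2_eq_square algebra_simps)
    then have "w \<bullet> w \<le> s * q w / 2"
      using s by (simp add: zero_le_mult_iff)
    also have "\<dots> \<le> e"
      using \<open>0 < e\<close> q_nonneg[of w] by (simp add: s_def field_simps)
    finally show "w \<bullet> w \<le> 0 + e"
      by simp
  qed
  then have "w = 0"
    by (metis inner_ge_zero inner_eq_zero_iff order_antisym)
  then show ?thesis
    by (simp add: w_def)
qed

lemma finite_eigenvalues_symmetric:
  fixes M :: "real^'n^'n"
  assumes symM: "transpose M = M"
  shows "finite {l. is_eigenvalue M l}"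
proof -
  define E where "E = {l. is_eigenvalue M l}"
  have "\<forall>l\<in>E. \<exists>u. u \<noteq> 0 \<and> M *v u = l *\<^sub>R u"
    unfolding E_def is_eigenvalue_def by blast
  then obtain ev where ev: "\<And>l. l \<in> E \<Longrightarrow> ev l \<noteq> 0 \<and> M *v ev l = l *\<^sub>R ev l"
    by metis
  have orth: "ev l \<bullet> ev l' = 0" if "l \<in> E" "l' \<in> E" "l \<noteq> l'" for l l'
  proof -
    have "(M *v ev l) \<bullet> ev l' = ev l \<bullet> (M *v ev l')"
      using symM symmetric_matrix_iff_inner by blast
    then have "l * (ev l \<bullet> ev l') = l' * (ev l \<bullet> ev l')"
      using ev[OF that(1)] ev[OF that(2)] by simp
    then show ?thesis
      using that(3) by simp
  qed
  have "inj_on ev E"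
  proof (rule inj_onI)
    fix l l' assume "l \<in> E" "l' \<in> E" "ev l = ev l'"
    then show "l = l'"
      using orth[of l l'] ev[of l] by auto
  qed
  moreover have "independent (ev ` E)"
    using orth ev by (intro pairwise_orthogonal_independent) (auto simp: pairwise_def orthogonal_def)
  ultimately show ?thesis
    unfolding E_def[symmetric] using finite_imageD independent_imp_finite by blast
qed

lemma min_eigenvalue_symmetric:
  fixes M :: "real^'n^'n"
  assumes symM: "transpose M = M"
  shows "is_eigenvalue M (min_eigenvalue M)"
    and "min_eigenvalue M * (norm x)\<^sup>2 \<le> x \<bullet> (M *v x)"
proof -
  obtain v where v: "norm v = 1" and lower: "\<And>x. (v \<bullet> (M *v v)) * (norm x)\<^sup>2 \<le> x \<bullet> (M *v x)"
    using rayleigh_quotient_min_exists[of M] by blast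
  define l where "l = v \<bullet> (M *v v)"
  have lower_l: "l * (x \<bullet> x) \<le> x \<bullet> (M *v x)" for x
    using lower[of x] unfolding l_def power2_norm_eq_inner .
  have "v \<bullet> v = 1"
    using v norm_eq_1 by blast
  then have "l * (v \<bullet> v) = v \<bullet> (M *v v)"
    by (simp add: l_def)
  then have "M *v v = l *\<^sub>R v"
    by (rule rayleigh_quotient_min_eigenvector[OF symM lower_l])
  moreover have "v \<noteq> 0"
    using v by (metis norm_zero zero_neq_one)
  ultimately have eig: "is_eigenvalue M l"
    unfolding is_eigenvalue_def by blast
  have least: "l \<le> l'" if l': "is_eigenvalue M l'" for l'
  proof -
    obtain u where "u \<noteq> 0" "M *v u = l' *\<^sub>R u"
      using l' unfolding is_eigenvalue_def by blast
    then have "l * (u \<bullet> u) \<le> l' * (u \<bullet> u)" and "0 < u \<bullet> u"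
      using lower_l[of u] by simp_all
    then show ?thesis
      by simp
  qed
  have "min_eigenvalue M = l"
    unfolding min_eigenvalue_def
  proof (rule Min_eqI)
    show "finite {l. is_eigenvalue M l}"
      by (rule finite_eigenvalues_symmetric[OF symM])
  qed (use eig least in auto)
  then show "is_eigenvalue M (min_eigenvalue M)" and "min_eigenvalue M * (norm x)\<^sup>2 \<le> x \<bullet> (M *v x)"
    using eig lower_l[of x] by (simp_all only: power2_norm_eq_inner)
qed

lemma min_eigenvalue_pos:
  fixes M :: "real^'n^'n"
  assumes symM: "transpose M = M" and pos: "\<And>x. x \<noteq> 0 \<Longrightarrow> 0 < x \<bullet> (M *v x)"
  shows "0 < min_eigenvalue M"
proof -
  obtain u where "u \<noteq> 0" and u: "M *v u = min_eigenvalue M *\<^sub>R u"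
    using min_eigenvalue_symmetric(1)[OF symM] unfolding is_eigenvalue_def by blast
  have "0 < min_eigenvalue M * (u \<bullet> u)"
    using pos[OF \<open>u \<noteq> 0\<close>] unfolding u inner_scaleR_right .
  moreover have "0 < u \<bullet> u"
    using \<open>u \<noteq> 0\<close> by (rule inner_gt_zero_iff[THEN iffD2])
  ultimately show ?thesis
    using zero_less_mult_pos2 by blast
qed

section \<open>Gradients\<close>

lemma grad_eqI:
  fixes f :: "'a::euclidean_space \<Rightarrow> real"
  assumes "(f has_derivative (\<lambda>h. g \<bullet> h)) (at x)"
  shows "grad f x = g"
  unfolding grad_def
proof (rule the_equality)
  fix g'
  assume "(f has_derivative (\<lambda>h. g' \<bullet> h)) (at x)"
  then have "(\<lambda>h. g' \<bullet> h) = (\<lambda>h. g \<bullet> h)"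
    using assms by (rule has_derivative_unique)
  then show "g' = g"
    by (metis vector_eq_rdot)
qed (fact assms)

lemma has_derivative_grad:
  fixes f :: "'a::euclidean_space \<Rightarrow> real"
  assumes "f differentiable (at x)"
  shows "(f has_derivative (\<lambda>h. grad f x \<bullet> h)) (at x)"
proof -
  obtain f' where f': "(f has_derivative f') (at x)"
    using assms by (auto simp: differentiable_def)
  have "f' = (\<lambda>h. adjoint f' 1 \<bullet> h)"
    using adjoint_works[OF has_derivative_linear[OF f'], of _ 1] by (auto simp: inner_commute)
  with f' show ?thesis
    by (metis grad_eqI)
qed

lemma descent_lemma:
  fixes \<Phi> :: "'a::euclidean_space \<Rightarrow> real"
  assumes diff: "\<And>z. \<Phi> differentiable (at z)"
    and lip: "\<And>z w. norm (grad \<Phi> z - grad \<Phi> w) \<le> L * norm (z - w)"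
  shows "\<Phi> z \<le> \<Phi> w + grad \<Phi> w \<bullet> (z - w) + L / 2 * (norm (z - w))\<^sup>2"
proof -
  define d where "d = z - w"
  define k where "k t = \<Phi> (w + t *\<^sub>R d) - t * (grad \<Phi> w \<bullet> d) - L / 2 * t\<^sup>2 * (norm d)\<^sup>2" for t
  have dk: "(k has_real_derivative
      (grad \<Phi> (w + t *\<^sub>R d) - grad \<Phi> w) \<bullet> d - L * t * (norm d)\<^sup>2) (at t)" for t
  proof -
    have "((\<lambda>t. \<Phi> (w + t *\<^sub>R d)) has_derivative (\<lambda>s. grad \<Phi> (w + t *\<^sub>R d) \<bullet> (s *\<^sub>R d))) (at t)"
      by (rule has_derivative_compose[OF _ has_derivative_grad[OF diff]])
        (auto intro!: derivative_eq_intros)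
    then have "((\<lambda>t. \<Phi> (w + t *\<^sub>R d)) has_real_derivative grad \<Phi> (w + t *\<^sub>R d) \<bullet> d) (at t)"
      by (simp add: has_field_derivative_def mult.commute[of _ "grad \<Phi> _ \<bullet> d"])
    then show ?thesis
      unfolding k_def by (auto intro!: derivative_eq_intros simp: inner_diff_left)
  qed
  have "k 1 \<le> k 0"
  proof (rule DERIV_nonpos_imp_nonincreasing[of 0 1 k])
    fix t :: real
    assume t: "0 \<le> t" "t \<le> 1"
    have "(grad \<Phi> (w + t *\<^sub>R d) - grad \<Phi> w) \<bullet> d \<le> norm (grad \<Phi> (w + t *\<^sub>R d) - grad \<Phi> w) * norm d"
      by (rule norm_cauchy_schwarz)
    also have "\<dots> \<le> L * norm (t *\<^sub>R d) * norm d"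
      using lip[of "w + t *\<^sub>R d" w] by (intro mult_right_mono) auto
    also have "\<dots> = L * t * (norm d)\<^sup>2"
      using t by (simp add: power2_eq_square)
    finally show "\<exists>y. (k has_real_derivative y) (at t) \<and> y \<le> 0"
      using dk[of t] by auto
  qed simp
  then show ?thesis
    by (simp add: k_def d_def)
qed

text \<open>A gradient-Lipschitz constant L \<le> 0 would make the gradient constant, and an affine
  function is not coercive.\<close>
lemma lipschitz_gradient_pos_if_coercive:
  fixes \<Phi> :: "'a::euclidean_space \<Rightarrow> real"
  assumes coercive: "coercive \<Phi>"
    and diff: "\<And>z. \<Phi> differentiable (at z)"
    and lip: "\<And>z w. norm (grad \<Phi> z - grad \<Phi> w) \<le> L * norm (z - w)"
  shows "L > 0"
proof (rule ccontr)
  assume "\<not> L > 0"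
  define g where "g = grad \<Phi> 0"
  have grad_const: "grad \<Phi> z = g" for z
  proof -
    have "norm (grad \<Phi> z - g) \<le> L * norm z"
      using lip[of z 0] by (simp add: g_def)
    also have "\<dots> \<le> 0"
      using \<open>\<not> L > 0\<close> by (simp add: mult_nonpos_nonneg)
    finally show ?thesis
      by simp
  qed
  have "\<exists>c. \<forall>x\<in>UNIV. \<Phi> x - g \<bullet> x = c"
  proof (rule has_derivative_zero_constant)
    fix x :: 'a
    have "((\<lambda>x. \<Phi> x - g \<bullet> x) has_derivative (\<lambda>h. grad \<Phi> x \<bullet> h - g \<bullet> h)) (at x)"
      by (intro has_derivative_diff has_derivative_grad[OF diff]
          bounded_linear.has_derivative[OF bounded_linear_inner_right] has_derivative_ident)
    then show "((\<lambda>x. \<Phi> x - g \<bullet> x) has_derivative (\<lambda>h. 0)) (at x within UNIV)"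
      by (simp add: grad_const)
  qed simp
  then obtain c where affine: "\<Phi> x = c + g \<bullet> x" for x
    by (metis UNIV_I diff_eq_eq add.commute)
  obtain v :: 'a where "v \<noteq> 0" and "g \<bullet> v \<le> 0"
  proof (cases "g = 0")
    case True
    then show thesis
      using that[of "SOME b. b \<in> Basis"] by (metis nonempty_Basis nonzero_Basis some_in_eq inner_zero_left order_refl)
  next
    case False
    then show thesis
      using that[of "- g"] by simp
  qed
  obtain b where b: "\<And>x. b \<le> norm x \<Longrightarrow> c + 1 \<le> \<Phi> x"
    using coercive unfolding coercive_def filterlim_at_top eventually_at_infinity by blast
  define t where "t = (\<bar>b\<bar> + 1) / norm v"
  have "0 < t" and "norm (t *\<^sub>R v) = \<bar>b\<bar> + 1"
    using \<open>v \<noteq> 0\<close> by (simp_all add: t_def)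
  then have "c + 1 \<le> \<Phi> (t *\<^sub>R v)"
    by (intro b) simp
  moreover have "\<Phi> (t *\<^sub>R v) \<le> c"
    using affine \<open>0 < t\<close> \<open>g \<bullet> v \<le> 0\<close> by (simp add: mult_nonneg_nonpos)
  ultimately show False
    by simp
qed

section \<open>Half-quadratic potentials\<close>

text \<open>Hypotheses (A3ii)-(A3iv) on one potential, without the upper bound deriv \<psi> t \<le> \<omega> t,
  which the decrease estimate does not need.\<close>
locale half_quadratic_potential =
  fixes \<psi> :: "real \<Rightarrow> real"
  assumes differentiable: "\<And>t. \<psi> differentiable (at t)"
    and concave_sqrt: "concave_on {0..} (\<lambda>t. \<psi> (sqrt t))"
    and deriv_nonneg: "\<And>t. t > 0 \<Longrightarrow> 0 \<le> deriv \<psi> t"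
    and weight_converges: "\<exists>l. ((\<lambda>t. deriv \<psi> t / t) \<longlongrightarrow> l) (at 0)"
begin

lemma has_real_derivative: "(\<psi> has_real_derivative deriv \<psi> t) (at t)"
  using differentiable DERIV_deriv_iff_real_differentiable by blast

lemma tendsto_omega_0: "((\<lambda>t. deriv \<psi> t / t) \<longlongrightarrow> omega \<psi> 0) (at 0)"
  using weight_converges tendsto_Lim[OF trivial_limit_at] by (auto simp: omega_def)

lemma omega_nonneg:
  assumes "r \<ge> 0"
  shows "omega \<psi> r \<ge> 0"
proof (cases "r = 0")
  case True
  have "((\<lambda>t. deriv \<psi> t / t) \<longlongrightarrow> omega \<psi> 0) (at_right 0)"
    using tendsto_omega_0 by (rule tendsto_mono[OF at_le, rotated]) simp
  moreover have "\<forall>\<^sub>F t in at_right 0. 0 \<le> deriv \<psi> t / t"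
    using eventually_at_right_less[of "0::real"] by eventually_elim (simp add: deriv_nonneg)
  ultimately show ?thesis
    using True by (intro tendsto_lowerbound) auto
qed (use assms deriv_nonneg in \<open>simp add: omega_def\<close>)

text \<open>Concavity of t \<mapsto> \<psi> (sqrt t) puts its graph below the tangent at t = r0^2.\<close>
lemma le_tangent_majorant:
  assumes r0: "r0 > 0" and r: "r \<ge> 0"
  shows "\<psi> r \<le> \<psi> r0 + omega \<psi> r0 / 2 * (r\<^sup>2 - r0\<^sup>2)"
proof -
  define g where "g t = - \<psi> (sqrt t)" for t
  have convex: "convex_on {0..} g"
    using concave_sqrt unfolding g_def concave_on_def .
  have "(g has_real_derivative - (deriv \<psi> r0 * (inverse r0 / 2))) (at (r0\<^sup>2))"
    using DERIV_chain2[OF has_real_derivative DERIV_real_sqrt, of "r0\<^sup>2"] r0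
    unfolding g_def by (auto intro: DERIV_minus)
  then have "g (r\<^sup>2) - g (r0\<^sup>2) \<ge> - (deriv \<psi> r0 * (inverse r0 / 2)) * (r\<^sup>2 - r0\<^sup>2)"
    using r0 by (intro convex_on_imp_above_tangent[OF convex])
      (auto intro: has_field_derivative_at_within simp: convex_connected)
  then show ?thesis
    using r0 r by (simp add: g_def omega_def field_simps)
qed

lemma le_quadratic_majorant:
  assumes r: "r \<ge> 0" and r0: "r0 \<ge> 0"
  shows "\<psi> r \<le> \<psi> r0 + omega \<psi> r0 / 2 * (r\<^sup>2 - r0\<^sup>2)"
proof (cases "r0 = 0")
  case True
  text \<open>At r0 = 0 the tangent majorants at r0 > 0 converge to the claimed one.\<close>
  have \<psi>: "(\<psi> \<longlongrightarrow> \<psi> 0) (at_right 0)"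
    using has_real_derivative[THEN DERIV_isCont, of 0] unfolding isCont_def
    by (rule tendsto_mono[OF at_le, rotated]) simp
  have \<omega>: "((\<lambda>t. deriv \<psi> t / t) \<longlongrightarrow> omega \<psi> 0) (at_right 0)"
    using tendsto_omega_0 by (rule tendsto_mono[OF at_le, rotated]) simp
  have "((\<lambda>\<rho>. \<psi> \<rho> + deriv \<psi> \<rho> / \<rho> / 2 * (r\<^sup>2 - \<rho>\<^sup>2))
      \<longlongrightarrow> \<psi> 0 + omega \<psi> 0 / 2 * (r\<^sup>2 - 0\<^sup>2)) (at_right 0)"
    by (intro tendsto_intros \<psi> \<omega>) simp
  moreover have "\<forall>\<^sub>F \<rho> in at_right 0. \<psi> r \<le> \<psi> \<rho> + deriv \<psi> \<rho> / \<rho> / 2 * (r\<^sup>2 - \<rho>\<^sup>2)"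
    using eventually_at_right_less[of "0::real"]
    by eventually_elim (use le_tangent_majorant r in \<open>auto simp: omega_def\<close>)
  ultimately show ?thesis
    using True by (intro tendsto_le[OF trivial_limit_at_right_real _ tendsto_const]) auto
qed (use le_tangent_majorant assms in auto)

lemma ge_value_at_0:
  assumes "r \<ge> 0"
  shows "\<psi> 0 \<le> \<psi> r"
proof (cases "r = 0")
  case False
  then obtain z where "0 < z" and "\<psi> r - \<psi> 0 = (r - 0) * deriv \<psi> z"
    using assms MVT2[of 0 r \<psi> "deriv \<psi>"] has_real_derivative by force
  moreover have "0 \<le> r * deriv \<psi> z"
    using assms deriv_nonneg[OF \<open>0 < z\<close>] by simp
  ultimately show ?thesis
    by simp
qed simp

lemma has_derivative_comp_norm:
  fixes z0 :: "'a::real_inner"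
  shows "((\<lambda>z. \<psi> (norm z)) has_derivative (\<lambda>h. omega \<psi> (norm z0) * (z0 \<bullet> h))) (at z0)"
proof (cases "z0 = 0")
  case False
  have "((\<lambda>z. \<psi> (norm z)) has_derivative (\<lambda>h. deriv \<psi> (norm z0) * (h \<bullet> sgn z0))) (at z0)"
    using has_derivative_compose[OF has_derivative_norm[OF False]
        has_real_derivative[unfolded has_field_derivative_def]]
    by (simp add: ac_simps)
  moreover have "deriv \<psi> (norm z0) * (h \<bullet> sgn z0) = omega \<psi> (norm z0) * (z0 \<bullet> h)" for h
    using False by (simp add: omega_def sgn_div_norm inner_commute field_simps)
  ultimately show ?thesis
    by simp
next
  case True
  text \<open>Near the origin 0 \<le> \<psi> (norm z) - \<psi> 0 \<le> omega \<psi> 0 / 2 * (norm z)^2.\<close>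
  have bound: "norm (\<psi> (norm z) - \<psi> (norm z0) - 0) / norm (z - z0) \<le> omega \<psi> 0 / 2 * norm (z - z0)"
    for z
  proof (cases "z = 0")
    case False
    have "\<bar>\<psi> (norm z) - \<psi> 0\<bar> \<le> omega \<psi> 0 / 2 * (norm z)\<^sup>2"
      using le_quadratic_majorant[of "norm z" 0] ge_value_at_0[of "norm z"] by simp
    then show ?thesis
      using True False by (simp add: divide_le_eq power2_eq_square mult.assoc)
  qed (simp add: True)
  have "((\<lambda>z. norm (\<psi> (norm z) - \<psi> (norm z0) - 0) / norm (z - z0)) \<longlongrightarrow> 0) (at z0)"
  proof (rule Lim_null_comparison)
    show "\<forall>\<^sub>F z in at z0. norm (norm (\<psi> (norm z) - \<psi> (norm z0) - 0) / norm (z - z0))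
        \<le> omega \<psi> 0 / 2 * norm (z - z0)"
      using bound by simp
    show "((\<lambda>z. omega \<psi> 0 / 2 * norm (z - z0)) \<longlongrightarrow> 0) (at z0)"
      by (intro tendsto_eq_intros) auto
  qed
  then show ?thesis
    using True by (simp add: has_derivative_iff_norm)
qed

end

section \<open>The objective and its quadratic majorant\<close>

lemma has_derivative_matrix_affine:
  fixes A :: "real^'n^'m"
  shows "((\<lambda>x. A *v x - b) has_derivative (\<lambda>h. A *v h)) (at x)"
  using has_derivative_diff[OF bounded_linear.has_derivative[OF matrix_vector_mul_bounded_linear
        has_derivative_ident] has_derivative_const[of b]]
  by simp

definition block_mask :: "('p \<Rightarrow> nat) \<Rightarrow> nat \<Rightarrow> real^'p^'p" where
  "block_mask blk s = Diag (\<chi> p. if blk p = s then 1 else 0)"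

lemma blocknorm_eq_norm_block_mask:
  "blocknorm V c blk s x = norm (block_mask blk s *v (V *v x - c))"
proof -
  have "(\<Sum>p\<in>UNIV. ((if blk p = s then 1 else 0) * (V *v x - c) $ p)\<^sup>2)
      = (\<Sum>p\<in>{p. blk p = s}. ((V *v x - c) $ p)\<^sup>2)"
    by (simp add: if_distrib[of "\<lambda>u. (u * _)\<^sup>2"] sum.If_cases Collect_conj_eq[symmetric] cong: if_cong)
  then show ?thesis
    by (simp add: blocknorm_def block_mask_def norm_eq_sqrt_inner inner_vec_def Diag_mult_vector
        power2_eq_square)
qed

lemma sum_weighted_inner_block_mask:
  assumes blocks: "blk ` UNIV \<subseteq> {1..S}"
  shows "(\<Sum>s=1..S. w s * ((block_mask blk s *v a) \<bullet> (block_mask blk s *v b)))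
       = a \<bullet> (Diag (\<chi> p. w (blk p)) *v b)"
proof -
  have "(\<Sum>s=1..S. w s * ((block_mask blk s *v a) \<bullet> (block_mask blk s *v b)))
      = (\<Sum>p\<in>UNIV. \<Sum>s=1..S. if blk p = s then w (blk p) * (a $ p * b $ p) else 0)"
    by (subst sum.swap) (auto simp: block_mask_def Diag_mult_vector inner_vec_def sum_distrib_left
        intro!: sum.cong)
  also have "\<dots> = (\<Sum>p\<in>UNIV. w (blk p) * (a $ p * b $ p))"
  proof (rule sum.cong[OF refl])
    fix p
    have "blk p \<in> {1..S}"
      using blocks by blast
    then show "(\<Sum>s=1..S. if blk p = s then w (blk p) * (a $ p * b $ p) else 0)
        = w (blk p) * (a $ p * b $ p)"
      by (simp only: sum.delta' finite_atLeastAtMost if_True)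
  qed
  finally show ?thesis
    by (simp add: Diag_mult_vector inner_vec_def ac_simps)
qed

definition majorant_weights :: "(nat \<Rightarrow> real \<Rightarrow> real \<Rightarrow> real) \<Rightarrow> real \<Rightarrow> real^'n^'p \<Rightarrow> real^'p \<Rightarrow>
    ('p \<Rightarrow> nat) \<Rightarrow> real^'n \<Rightarrow> real^'p" where
  "majorant_weights psi \<delta> V c blk x = (\<chi> p. omega (psi (blk p) \<delta>) (blocknorm V c blk (blk p) x))"

text \<open>F, A and weights below are F_delta, A and b of the paper; only the hypotheses that the
  decrease estimate uses are assumed.\<close>
locale mm_objective =
  fixes \<Phi> :: "real^'q \<Rightarrow> real" and H :: "real^'n^'q" and y :: "real^'q"
    and V0 :: "real^'n^'r" and V :: "real^'n^'p" and c :: "real^'p" and blk :: "'p \<Rightarrow> nat"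
    and S :: nat and psi :: "nat \<Rightarrow> real \<Rightarrow> real \<Rightarrow> real" and \<delta> L \<mu> :: real
  assumes blocks: "blk ` UNIV \<subseteq> {1..S}"
    and \<Phi>_differentiable: "\<And>z. \<Phi> differentiable (at z)"
    and \<Phi>_lipschitz: "\<And>z w. norm (grad \<Phi> z - grad \<Phi> w) \<le> L * norm (z - w)"
    and L_le_\<mu>: "L \<le> \<mu>"
    and potentials: "\<And>s. s \<in> {1..S} \<Longrightarrow> half_quadratic_potential (psi s \<delta>)"
begin

abbreviation F :: "real^'n \<Rightarrow> real" where
  "F \<equiv> Fdelta \<Phi> H y psi \<delta> S V c blk V0"

abbreviation A :: "real^'n \<Rightarrow> real^'n^'n" where
  "A \<equiv> Amat \<mu> H V0 psi \<delta> V c blk"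

abbreviation weights :: "real^'n \<Rightarrow> real^'p" where
  "weights \<equiv> majorant_weights psi \<delta> V c blk"

abbreviation R :: "nat \<Rightarrow> real^'p^'p" where
  "R \<equiv> block_mask blk"

lemma F_eq: "F x = \<Phi> (H *v x - y) + (\<Sum>s=1..S. psi s \<delta> (norm (R s *v (V *v x - c))))
    + (V0 *v x) \<bullet> (V0 *v x)"
  by (simp add: Fdelta_def blocknorm_eq_norm_block_mask power2_norm_eq_inner)

lemma sum_weights_inner_block_mask:
  "(\<Sum>s=1..S. omega (psi s \<delta>) (norm (R s *v (V *v x - c))) * ((R s *v a) \<bullet> (R s *v b)))
     = a \<bullet> (Diag (weights x) *v b)"
  using sum_weighted_inner_block_mask[OF blocks, of "\<lambda>s. omega (psi s \<delta>) (blocknorm V c blk s x)"]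
  by (simp add: majorant_weights_def blocknorm_eq_norm_block_mask)

lemma has_derivative_F:
  "(F has_derivative (\<lambda>h. grad \<Phi> (H *v x - y) \<bullet> (H *v h)
      + (V *v x - c) \<bullet> (Diag (weights x) *v (V *v h)) + 2 * ((V0 *v x) \<bullet> (V0 *v h)))) (at x)"
proof -
  have \<Phi>: "((\<lambda>x. \<Phi> (H *v x - y)) has_derivative (\<lambda>h. grad \<Phi> (H *v x - y) \<bullet> (H *v h))) (at x)"
    by (rule has_derivative_compose[OF has_derivative_matrix_affine has_derivative_grad[OF \<Phi>_differentiable]])
  have "((\<lambda>x. psi s \<delta> (norm (R s *v (V *v x - c)))) has_derivative
      (\<lambda>h. omega (psi s \<delta>) (norm (R s *v (V *v x - c))) * ((R s *v (V *v x - c)) \<bullet> (R s *v (V *v h)))))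
      (at x)" if "s \<in> {1..S}" for s
  proof -
    have "((\<lambda>x. R s *v (V *v x - c)) has_derivative (\<lambda>h. R s *v (V *v h))) (at x)"
      by (rule has_derivative_compose[OF has_derivative_matrix_affine
            bounded_linear.has_derivative[OF matrix_vector_mul_bounded_linear has_derivative_ident]])
    then show ?thesis
      by (rule has_derivative_compose[OF _ half_quadratic_potential.has_derivative_comp_norm[OF potentials[OF that]]])
  qed
  then have "((\<lambda>x. \<Sum>s=1..S. psi s \<delta> (norm (R s *v (V *v x - c)))) has_derivative
      (\<lambda>h. \<Sum>s=1..S. omega (psi s \<delta>) (norm (R s *v (V *v x - c)))
                      * ((R s *v (V *v x - c)) \<bullet> (R s *v (V *v h))))) (at x)"
    by (rule has_derivative_sum)
  then have \<psi>: "((\<lambda>x. \<Sum>s=1..S. psi s \<delta> (norm (R s *v (V *v x - c)))) has_derivative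
      (\<lambda>h. (V *v x - c) \<bullet> (Diag (weights x) *v (V *v h)))) (at x)"
    by (simp only: sum_weights_inner_block_mask)
  have V0: "((\<lambda>x. (V0 *v x) \<bullet> (V0 *v x)) has_derivative (\<lambda>h. 2 * ((V0 *v x) \<bullet> (V0 *v h)))) (at x)"
    using has_derivative_inner[OF bounded_linear.has_derivative[OF matrix_vector_mul_bounded_linear
          has_derivative_ident] bounded_linear.has_derivative[OF matrix_vector_mul_bounded_linear
          has_derivative_ident], of V0 V0 x]
    by (simp add: inner_commute)
  show ?thesis
    unfolding F_eq[abs_def] by (intro has_derivative_add \<Phi> \<psi> V0)
qed

lemma grad_F_inner:
  "grad F x \<bullet> h = grad \<Phi> (H *v x - y) \<bullet> (H *v h)
      + (V *v x - c) \<bullet> (Diag (weights x) *v (V *v h)) + 2 * ((V0 *v x) \<bullet> (V0 *v h))"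
proof -
  have "F differentiable (at x)"
    using has_derivative_F by (rule differentiableI)
  then have "(\<lambda>h. grad F x \<bullet> h) = (\<lambda>h. grad \<Phi> (H *v x - y) \<bullet> (H *v h)
      + (V *v x - c) \<bullet> (Diag (weights x) *v (V *v h)) + 2 * ((V0 *v x) \<bullet> (V0 *v h)))"
    by (rule has_derivative_unique[OF has_derivative_grad has_derivative_F])
  then show ?thesis
    using fun_cong[of _ _ h] by simp
qed

lemma weights_nonneg: "0 \<le> weights x $ p"
proof -
  have "blk p \<in> {1..S}"
    using blocks by blast
  then show ?thesis
    using half_quadratic_potential.omega_nonneg[OF potentials]
    by (simp add: majorant_weights_def blocknorm_eq_norm_block_mask)
qed

lemma A_eq: "A x = \<mu> *\<^sub>R (transpose H ** H) + 2 *\<^sub>R (transpose V0 ** V0)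
    + transpose V ** Diag (weights x) ** V"
  by (simp add: Amat_def majorant_weights_def)

lemma A_symmetric: "transpose (A x) = A x"
  by (simp add: A_eq transpose_add transpose_scalar transpose_Diag matrix_transpose_mul matrix_mul_assoc)

lemma inner_A: "d \<bullet> (A x *v d) = \<mu> * (norm (H *v d))\<^sup>2 + 2 * (norm (V0 *v d))\<^sup>2
    + (V *v d) \<bullet> (Diag (weights x) *v (V *v d))"
  by (simp add: A_eq matrix_vector_mult_add_rdistrib scaleR_matrix_vector_assoc[symmetric]
      inner_add_right inner_transpose_mult_self inner_transpose_mult_mult)

lemma \<Phi>_le_quadratic_majorant:
  "\<Phi> (H *v x - y) \<le> \<Phi> (H *v x' - y) + grad \<Phi> (H *v x' - y) \<bullet> (H *v (x - x'))
    + \<mu> / 2 * (norm (H *v (x - x')))\<^sup>2"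
proof -
  have "\<Phi> (H *v x - y) \<le> \<Phi> (H *v x' - y) + grad \<Phi> (H *v x' - y) \<bullet> (H *v (x - x'))
      + L / 2 * (norm (H *v (x - x')))\<^sup>2"
    using descent_lemma[OF \<Phi>_differentiable \<Phi>_lipschitz, of "H *v x - y" "H *v x' - y"]
    by (simp add: matrix_vector_mult_diff_distrib)
  also have "\<dots> \<le> \<Phi> (H *v x' - y) + grad \<Phi> (H *v x' - y) \<bullet> (H *v (x - x'))
      + \<mu> / 2 * (norm (H *v (x - x')))\<^sup>2"
    using L_le_\<mu> by (simp add: mult_right_mono)
  finally show ?thesis .
qed

lemma potentials_le_quadratic_majorant:
  "(\<Sum>s=1..S. psi s \<delta> (norm (R s *v (V *v x - c))))
    \<le> (\<Sum>s=1..S. psi s \<delta> (norm (R s *v (V *v x' - c))))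
      + (V *v x' - c) \<bullet> (Diag (weights x') *v (V *v (x - x')))
      + 1/2 * ((V *v (x - x')) \<bullet> (Diag (weights x') *v (V *v (x - x'))))"
proof -
  define e where "e = V *v x' - c"
  define d where "d = V *v (x - x')"
  define \<omega> where "\<omega> s = omega (psi s \<delta>) (norm (R s *v e))" for s
  have "(\<Sum>s=1..S. psi s \<delta> (norm (R s *v (V *v x - c))))
      \<le> (\<Sum>s=1..S. psi s \<delta> (norm (R s *v e)) + \<omega> s / 2 *
            (2 * ((R s *v e) \<bullet> (R s *v d)) + (R s *v d) \<bullet> (R s *v d)))"
  proof (rule sum_mono)
    fix s
    assume s: "s \<in> {1..S}"
    have "V *v x - c = e + d"
      by (simp add: e_def d_def matrix_vector_mult_diff_distrib)
    then have "(norm (R s *v (V *v x - c)))\<^sup>2 - (norm (R s *v e))\<^sup>2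
        = 2 * ((R s *v e) \<bullet> (R s *v d)) + (R s *v d) \<bullet> (R s *v d)"
      by (simp add: matrix_vector_right_distrib power2_norm_eq_inner inner_add_left
          inner_add_right inner_commute)
    then show "psi s \<delta> (norm (R s *v (V *v x - c))) \<le> psi s \<delta> (norm (R s *v e)) + \<omega> s / 2 *
        (2 * ((R s *v e) \<bullet> (R s *v d)) + (R s *v d) \<bullet> (R s *v d))"
      using half_quadratic_potential.le_quadratic_majorant[OF potentials[OF s], of
          "norm (R s *v (V *v x - c))" "norm (R s *v e)"]
      by (simp add: \<omega>_def)
  qed
  also have "\<dots> = (\<Sum>s=1..S. psi s \<delta> (norm (R s *v e)))
      + (\<Sum>s=1..S. \<omega> s * ((R s *v e) \<bullet> (R s *v d)))
      + 1/2 * (\<Sum>s=1..S. \<omega> s * ((R s *v d) \<bullet> (R s *v d)))"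
    by (simp add: sum.distrib sum_distrib_left distrib_left mult.assoc)
  also have "\<dots> = (\<Sum>s=1..S. psi s \<delta> (norm (R s *v e))) + e \<bullet> (Diag (weights x') *v d)
      + 1/2 * (d \<bullet> (Diag (weights x') *v d))"
    using sum_weights_inner_block_mask[of x' e d] sum_weights_inner_block_mask[of x' d d]
    unfolding \<omega>_def e_def by simp
  finally show ?thesis
    unfolding e_def d_def .
qed

lemma F_le_quadratic_majorant:
  "F x \<le> F x' + grad F x' \<bullet> (x - x') + 1/2 * ((x - x') \<bullet> (A x' *v (x - x')))"
proof -
  have "(V0 *v x) \<bullet> (V0 *v x) = (V0 *v x') \<bullet> (V0 *v x') + 2 * ((V0 *v x') \<bullet> (V0 *v (x - x')))
      + (norm (V0 *v (x - x')))\<^sup>2"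
    by (simp add: matrix_vector_mult_diff_distrib power2_norm_eq_inner inner_diff_left
        inner_diff_right inner_commute)
  then show ?thesis
    using \<Phi>_le_quadratic_majorant[of x x'] potentials_le_quadratic_majorant[of x x']
    unfolding F_eq grad_F_inner inner_A by (simp add: algebra_simps)
qed

end

section \<open>Decrease along a subspace step\<close>

text \<open>With X = pinv (D^T A D) we have X (D^T A D) X = X and X symmetric, so the step
  D X D^T G has the same inner product with G as its A-energy.\<close>
lemma inner_pinv_subspace_step:
  fixes D :: "real^'m^'n" and A :: "real^'n^'n" and G :: "real^'n"
  assumes symA: "transpose A = A"
  defines "w \<equiv> pinv (transpose D ** A ** D) *v (transpose D *v G)"
  shows "G \<bullet> (D *v w) = (D *v w) \<bullet> (A *v (D *v w))"
proof -
  define B where "B = transpose D ** A ** D"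
  define X where "X = pinv B"
  have "transpose B = B"
    by (simp add: B_def matrix_transpose_mul symA matrix_mul_assoc)
  then have XBX: "X ** B ** X = X" and symX: "transpose X = X"
    using pinv_symmetric unfolding X_def is_pseudo_inverse_def by blast+
  have w: "w = X *v (transpose D *v G)"
    by (simp add: w_def X_def B_def)
  have "(D *v w) \<bullet> (A *v (D *v w)) = w \<bullet> (B *v w)"
    by (simp add: B_def inner_transpose_mult_mult)
  also have "\<dots> = (transpose D *v G) \<bullet> ((X ** B ** X) *v (transpose D *v G))"
    by (simp add: w inner_matrix_vector_transpose symX matrix_vector_mul_assoc matrix_mul_assoc)
  also have "\<dots> = (transpose D *v G) \<bullet> w"
    by (simp only: XBX w)
  also have "\<dots> = G \<bullet> (D *v w)"
    by (metis inner_commute inner_matrix_vector_transpose)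
  finally show ?thesis
    by simp
qed

context mm_objective
begin

lemma inner_A_ge:
  "z \<bullet> ((\<mu> *\<^sub>R (transpose H ** H) + 2 *\<^sub>R (transpose V0 ** V0)) *v z) \<le> z \<bullet> (A x *v z)"
  using inner_Diag_self_nonneg[of "weights x" "V *v z"] weights_nonneg
  by (simp add: inner_A inner_scaled_gram_sum)

lemma subspace_step_decrease:
  fixes D :: "real^'m^'n" and x :: "real^'n" and u u' :: "real^'m"
  assumes eta: "\<And>z. \<eta> * (norm z)\<^sup>2 \<le> z \<bullet> ((\<mu> *\<^sub>R (transpose H ** H) + 2 *\<^sub>R (transpose V0 ** V0)) *v z)"
    and step: "u' = u - pinv (transpose D ** A (x + D *v u) ** D)
                       *v (transpose D *v grad F (x + D *v u))"
  shows "F (x + D *v u) - F (x + D *v u') \<ge> \<eta> / 2 * (norm (x + D *v u' - (x + D *v u)))\<^sup>2"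
proof -
  define x0 where "x0 = x + D *v u"
  define w where "w = pinv (transpose D ** A x0 ** D) *v (transpose D *v grad F x0)"
  have x': "x + D *v u' = x0 - D *v w"
    by (simp add: step x0_def w_def matrix_vector_mult_diff_distrib)
  have "F (x0 - D *v w) \<le> F x0 - grad F x0 \<bullet> (D *v w) + 1/2 * ((D *v w) \<bullet> (A x0 *v (D *v w)))"
    using F_le_quadratic_majorant[of "x0 - D *v w" x0] by (simp add: matrix_vector_mult_uminus_right)
  also have "\<dots> = F x0 - 1/2 * ((D *v w) \<bullet> (A x0 *v (D *v w)))"
    using inner_pinv_subspace_step[OF A_symmetric, where D=D and G="grad F x0"]
    unfolding w_def by simp
  finally show ?thesis
    using eta[of "D *v w"] inner_A_ge[of "D *v w" x0] unfolding x' x0_def[symmetric] by simp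
qed

end

theorem lemma3:
  fixes \<Phi> :: "real^'q \<Rightarrow> real"
    and H :: "real^'n^'q" and y :: "real^'q"
    and V0 :: "real^'n^'r"
    and V :: "real^'n^'p" and c :: "real^'p" and blk :: "'p \<Rightarrow> nat"
    and S J :: nat
    and psi :: "nat \<Rightarrow> real \<Rightarrow> real \<Rightarrow> real"
    and \<delta> L \<mu> :: real
    and D :: "nat \<Rightarrow> real^'m^'n"
    and x :: "nat \<Rightarrow> real^'n" and u :: "nat \<Rightarrow> nat \<Rightarrow> real^'m"
  assumes MN: "CARD('m) \<le> CARD('n)"
    and J: "J \<ge> 1"
    and Hnz: "H \<noteq> 0"
    and blocks: "blk ` UNIV = {1..S}"
    and A1i: "continuous_on UNIV \<Phi>" "coercive \<Phi>"
    and A1ii: "\<And>s d. d > 0 \<Longrightarrow> s \<in> {1..S} \<Longrightarrow>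
                  continuous_on UNIV (psi s d) \<and> (\<forall>t. psi s d t \<ge> 0)"
    and A1iii: "{z. H *v z = 0} \<inter> {z. V0 *v z = 0} = {0}"
    and delta: "\<delta> > 0"
    and A3i: "\<And>z. \<Phi> differentiable (at z)"
             "\<And>z w. norm (grad \<Phi> z - grad \<Phi> w) \<le> L * norm (z - w)"
    and A3ii: "\<And>s t. s \<in> {1..S} \<Longrightarrow> psi s \<delta> differentiable (at t)"
    and A3iii: "\<And>s. s \<in> {1..S} \<Longrightarrow> concave_on {0..} (\<lambda>t. psi s \<delta> (sqrt t))"
    and A3iv: "\<And>s. s \<in> {1..S} \<Longrightarrow>
                 (\<exists>\<omega>\<ge>0. \<forall>t>0. 0 \<le> deriv (psi s \<delta>) t \<and> deriv (psi s \<delta>) t \<le> \<omega> * t)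
               \<and> (\<exists>l::real. ((\<lambda>t. deriv (psi s \<delta>) t / t) \<longlongrightarrow> l) (at 0))"
    and mu: "\<mu> \<ge> L"
    and u0: "\<And>k. u k 0 = 0"
    and uS: "\<And>k j. j < J \<Longrightarrow>
               u k (Suc j) = u k j -
                 pinv (transpose (D k) ** Amat \<mu> H V0 psi \<delta> V c blk (x k + D k *v u k j) ** D k)
                   *v (transpose (D k) *v grad (Fdelta \<Phi> H y psi \<delta> S V c blk V0) (x k + D k *v u k j))"
    and xS: "\<And>k. x (Suc k) = x k + D k *v u k J"
  shows "min_eigenvalue (\<mu> *\<^sub>R (transpose H ** H) + 2 *\<^sub>R (transpose V0 ** V0)) > 0 \<and>
         (\<forall>k j. j < J \<longrightarrow>
            Fdelta \<Phi> H y psi \<delta> S V c blk V0 (x k + D k *v u k j)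
              - Fdelta \<Phi> H y psi \<delta> S V c blk V0 (x k + D k *v u k (Suc j))
            \<ge> min_eigenvalue (\<mu> *\<^sub>R (transpose H ** H) + 2 *\<^sub>R (transpose V0 ** V0)) / 2
               * (norm ((x k + D k *v u k (Suc j)) - (x k + D k *v u k j)))^2)"
proof -
  define M where "M = \<mu> *\<^sub>R (transpose H ** H) + 2 *\<^sub>R (transpose V0 ** V0)"
  have symM: "transpose M = M"
    unfolding M_def by (rule transpose_scaled_gram_sum)
  have "\<mu> > 0"
    using lipschitz_gradient_pos_if_coercive[OF A1i(2) A3i] mu by simp
  then have "0 < min_eigenvalue M"
    using A1iii by (intro min_eigenvalue_pos[OF symM]) (simp add: M_def scaled_gram_sum_pos)
  have potentials: "half_quadratic_potential (psi s \<delta>)" if "s \<in> {1..S}" for s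
    using A3ii[OF that] A3iii[OF that] A3iv[OF that] by unfold_locales auto
  interpret mm_objective \<Phi> H y V0 V c blk S psi \<delta> L \<mu>
    using blocks A3i mu potentials unfolding mm_objective_def by auto
  show ?thesis
    using \<open>0 < min_eigenvalue M\<close>
      subspace_step_decrease[OF min_eigenvalue_symmetric(2)[OF symM, unfolded M_def] uS]
    unfolding M_def by blast
qed

end
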